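(* Let $0<\sigma\le 1$ and let $(u,m)$ be the classical solution of the system \[ \begin{cases} u_t + \frac{\sigma^2}{2} u_{xx} - ru + G(u_x,m)^2 = 0, & 0<t<T,\ 0<x<L,\\ m_t - \frac{\sigma^2}{2} m_{xx} - \{G(u_x,m)m\}_x = 0, & 0<t<T,\ 0<x<L,\\ m(0,x)=m_0(x),\quad u(T,x)=u_T(x), & 0\le x\le L,\\ u_x(t,0)=u_x(t,L)=0, & 0\le t\le T,\\ \frac{\sigma^2}{2} m_x(t,x) + G(u_x,m)m(t,x) = 0, & 0\le t\le T,\ x\in\{0,L\}, \end{cases} \] where $G(u_x,m)(t,x) := \frac12\left(b + c\int_0^L u_x(t,y)m(t,y)\,dy - u_x(t,x)\right)$. Then $\|u_t\|_{L^2((0,T)\times(0,L))}\le C$, where $C$ does not depend on $\sigma$.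
   Context: Standing setting: $L,T,r>0$ are constants, $\epsilon>0$, and $b=\frac{2}{2+\epsilon}$, $c=\frac{\epsilon}{2+\epsilon}$. The data satisfy: $u_T,m_0\in C^{2+\gamma}([0,L])$ for some $\gamma>0$; $u_T'(0)=u_T'(L)=0$ and $m_0(0)=m_0'(0)=m_0(L)=m_0'(L)=0$; $m_0$ is a probability density on $[0,L]$; $u_T\ge 0$. Constants may depend on $u_T,m_0,L,T,r,\epsilon$ but not on $\sigma\in(0,1]$. *)

theory Defs
  imports "HOL-Analysis.Analysis"
begin

definition bcoef :: "real \<Rightarrow> real" where "bcoef \<epsilon> = 2 / (2 + \<epsilon>)"
definition ccoef :: "real \<Rightarrow> real" where "ccoef \<epsilon> = \<epsilon> / (2 + \<epsilon>)"

definition C2gamma :: "real \<Rightarrow> real \<Rightarrow> (real \<Rightarrow> real) \<Rightarrow> (real \<Rightarrow> real) \<Rightarrow> (real \<Rightarrow> real) \<Rightarrow> bool" where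
  "C2gamma L \<gamma> f f1 f2 \<longleftrightarrow>
     (\<forall>x\<in>{0..L}. (f has_real_derivative f1 x) (at x within {0..L})
               \<and> (f1 has_real_derivative f2 x) (at x within {0..L}))
     \<and> (\<exists>K. \<forall>x\<in>{0..L}. \<forall>y\<in>{0..L}. \<bar>f2 x - f2 y\<bar> \<le> K * \<bar>x - y\<bar> powr \<gamma>)"

definition Gfun :: "real \<Rightarrow> real \<Rightarrow> (real \<Rightarrow> real \<Rightarrow> real) \<Rightarrow> (real \<Rightarrow> real \<Rightarrow> real) \<Rightarrow> real \<Rightarrow> real \<Rightarrow> real" where
  "Gfun \<epsilon> L ux m t x =
     (bcoef \<epsilon> + ccoef \<epsilon> * integral {0..L} (\<lambda>y. ux t y * m t y) - ux t x) / 2"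

definition classical_solution ::
  "real \<Rightarrow> real \<Rightarrow> real \<Rightarrow> real \<Rightarrow> real \<Rightarrow> (real \<Rightarrow> real) \<Rightarrow> (real \<Rightarrow> real) \<Rightarrow>
   (real \<Rightarrow> real \<Rightarrow> real) \<Rightarrow> (real \<Rightarrow> real \<Rightarrow> real) \<Rightarrow> (real \<Rightarrow> real \<Rightarrow> real) \<Rightarrow> (real \<Rightarrow> real \<Rightarrow> real) \<Rightarrow>
   (real \<Rightarrow> real \<Rightarrow> real) \<Rightarrow> (real \<Rightarrow> real \<Rightarrow> real) \<Rightarrow> (real \<Rightarrow> real \<Rightarrow> real) \<Rightarrow> (real \<Rightarrow> real \<Rightarrow> real) \<Rightarrow> bool" where
  "classical_solution L T r \<epsilon> \<sigma> uT m0 u ut ux uxx m mt mx mxx \<longleftrightarrow>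
    continuous_on ({0..T} \<times> {0..L}) (\<lambda>(t,x). u t x) \<and>
    continuous_on ({0..T} \<times> {0..L}) (\<lambda>(t,x). ut t x) \<and>
    continuous_on ({0..T} \<times> {0..L}) (\<lambda>(t,x). ux t x) \<and>
    continuous_on ({0..T} \<times> {0..L}) (\<lambda>(t,x). uxx t x) \<and>
    continuous_on ({0..T} \<times> {0..L}) (\<lambda>(t,x). m t x) \<and>
    continuous_on ({0..T} \<times> {0..L}) (\<lambda>(t,x). mt t x) \<and>
    continuous_on ({0..T} \<times> {0..L}) (\<lambda>(t,x). mx t x) \<and>
    continuous_on ({0..T} \<times> {0..L}) (\<lambda>(t,x). mxx t x) \<and>
    (\<forall>t\<in>{0..T}. \<forall>x\<in>{0..L}.
       ((\<lambda>s. u s x) has_real_derivative ut t x) (at t within {0..T}) \<and>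
       ((\<lambda>y. u t y) has_real_derivative ux t x) (at x within {0..L}) \<and>
       ((\<lambda>y. ux t y) has_real_derivative uxx t x) (at x within {0..L}) \<and>
       ((\<lambda>s. m s x) has_real_derivative mt t x) (at t within {0..T}) \<and>
       ((\<lambda>y. m t y) has_real_derivative mx t x) (at x within {0..L}) \<and>
       ((\<lambda>y. mx t y) has_real_derivative mxx t x) (at x within {0..L})) \<and>
    (\<forall>t\<in>{0<..<T}. \<forall>x\<in>{0<..<L}.
       ut t x + \<sigma>\<^sup>2 / 2 * uxx t x - r * u t x + (Gfun \<epsilon> L ux m t x)\<^sup>2 = 0 \<and>
       ((\<lambda>y. Gfun \<epsilon> L ux m t y * m t y) has_real_derivative (mt t x - \<sigma>\<^sup>2 / 2 * mxx t x)) (at x)) \<and>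
    (\<forall>x\<in>{0..L}. m 0 x = m0 x \<and> u T x = uT x) \<and>
    (\<forall>t\<in>{0..T}. ux t 0 = 0 \<and> ux t L = 0) \<and>
    (\<forall>t\<in>{0..T}. \<forall>x\<in>{0, L}. \<sigma>\<^sup>2 / 2 * mx t x + Gfun \<epsilon> L ux m t x * m t x = 0)"

end

theory Submission
  imports Defs
begin

text \<open>Multiplying the HJB equation by \<open>u\<^sub>t\<close> and using \<open>- 2 G\<^sup>2 u\<^sub>t \<le> G\<^sup>4 + u\<^sub>t\<^sup>2\<close> gives
  \<open>u\<^sub>t\<^sup>2 \<le> \<sigma>\<^sup>2 (- u\<^sub>x\<^sub>x u\<^sub>t) + 2 r u u\<^sub>t + G\<^sup>4\<close>. After integration over \<open>[0,T] \<times> [0,L]\<close>,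
  the first term is half the increase of \<open>\<integral> u\<^sub>x\<^sup>2\<close> (integration by parts, \<open>u\<^sub>x = 0\<close> on the
  boundary) and the second is \<open>r\<close> times the increase of \<open>\<integral> u\<^sup>2\<close>, so everything reduces to bounds on
  \<open>u\<^sub>x\<close> and \<open>G\<close> that do not depend on \<open>\<sigma>\<close>.

  If \<open>K\<close> is a Lipschitz constant of \<open>u\<^sub>T\<close>, the maximum principle applied to
  \<open>s (u(t,x) - u(t,y)) - K (x - y)\<close> (with \<open>s = \<plusminus>1\<close>, \<open>y \<le> x\<close>) gives \<open>|u\<^sub>x| \<le> K\<close>: at an
  interior maximum \<open>u\<^sub>x(t,x) = u\<^sub>x(t,y)\<close>, hence \<open>G(t,x) = G(t,y)\<close> since \<open>G\<close> depends on
  \<open>x\<close> only through \<open>u\<^sub>x\<close>, and the HJB equation together with \<open>r > 0\<close> yields a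
  contradiction. A minimum principle for \<open>exp (- \<lambda> t) \<psi>(x) m\<close> with a positive weight \<open>\<psi>\<close> shows
  \<open>m \<ge> 0\<close>; with conservation of mass this gives \<open>|\<integral> u\<^sub>x m| \<le> K\<close> and \<open>|G| \<le> (1 + 2K)/2\<close>.\<close>

lemma DERIV_max_right_endpoint_nonneg:
  fixes g :: "real \<Rightarrow> real"
  assumes d: "(g has_real_derivative D) (at x within {a..x})" and "a < x"
    and max: "\<And>y. y \<in> {a..x} \<Longrightarrow> g y \<le> g x"
  shows "0 \<le> D"
proof -
  have lim: "((\<lambda>y. (g y - g x) / (y - x)) \<longlongrightarrow> D) (at x within {a..x})"
    using d by (simp add: has_field_derivative_iff)
  have "\<forall>\<^sub>F y in at x within {a..x}. 0 \<le> (g y - g x) / (y - x)"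
    unfolding eventually_at_filter
    by (intro always_eventually allI impI) (use max in \<open>auto intro!: divide_nonpos_neg\<close>)
  then show ?thesis
    using tendsto_lowerbound[OF lim] \<open>a < x\<close> by (simp add: trivial_limit_within islimpt_Icc)
qed

lemma DERIV_max_left_endpoint_nonpos:
  fixes g :: "real \<Rightarrow> real"
  assumes d: "(g has_real_derivative D) (at x within {x..b})" and "x < b"
    and max: "\<And>y. y \<in> {x..b} \<Longrightarrow> g y \<le> g x"
  shows "D \<le> 0"
proof -
  have lim: "((\<lambda>y. (g y - g x) / (y - x)) \<longlongrightarrow> D) (at x within {x..b})"
    using d by (simp add: has_field_derivative_iff)
  have "\<forall>\<^sub>F y in at x within {x..b}. (g y - g x) / (y - x) \<le> 0"
    unfolding eventually_at_filter
    by (intro always_eventually allI impI) (use max in \<open>auto intro!: divide_nonpos_pos\<close>)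
  then show ?thesis
    using tendsto_upperbound[OF lim] \<open>x < b\<close> by (simp add: trivial_limit_within islimpt_Icc)
qed

lemma DERIV2_local_max:
  fixes g g' :: "real \<Rightarrow> real"
  assumes "0 < d"
    and g': "\<And>y. \<bar>y - x\<bar> < d \<Longrightarrow> (g has_real_derivative g' y) (at y)"
    and max: "\<And>y. \<bar>y - x\<bar> < d \<Longrightarrow> g y \<le> g x"
    and g'': "(g' has_real_derivative g'') (at x)"
  shows "g' x = 0" and "g'' \<le> 0"
proof -
  have "(g has_real_derivative g' x) (at x)"
    using g' \<open>0 < d\<close> by simp
  then show g'x: "g' x = 0"
    by (rule DERIV_local_max[OF _ \<open>0 < d\<close>]) (use max in \<open>auto simp: abs_minus_commute\<close>)
  show "g'' \<le> 0"
  proof (rule ccontr)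
    assume "\<not> g'' \<le> 0"
    then obtain e where "0 < e" and inc: "\<And>h. 0 < h \<Longrightarrow> h < e \<Longrightarrow> 0 < g' (x + h)"
      using DERIV_pos_inc_right[OF g''] g'x by force
    define h where "h = min e d / 2"
    have h: "0 < h" "h < e" "h < d" using \<open>0 < e\<close> \<open>0 < d\<close> by (auto simp: h_def)
    have "\<exists>l. (g has_real_derivative l) (at y) \<and> 0 < l" if "x < y" "y < x + h" for y
      using g'[of y] inc[of "y - x"] h that by auto
    moreover have "continuous_on {x..x + h} g"
      using h by (intro continuous_at_imp_continuous_on ballI DERIV_isCont[OF g']) auto
    ultimately have "g x < g (x + h)"
      using DERIV_pos_imp_increasing_open[of x "x + h" g] h by auto
    with max[of "x + h"] h show False by auto
  qed
qed

lemma DERIV_abs_le_of_lipschitz: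
  fixes f :: "real \<Rightarrow> real"
  assumes d: "(f has_real_derivative D) (at x within {a..b})" and "a < b" and "x \<in> {a..b}"
    and lip: "\<And>y. y \<in> {a..b} \<Longrightarrow> \<bar>f y - f x\<bar> \<le> K * \<bar>y - x\<bar>"
  shows "\<bar>D\<bar> \<le> K"
proof -
  have lim: "((\<lambda>y. \<bar>(f y - f x) / (y - x)\<bar>) \<longlongrightarrow> \<bar>D\<bar>) (at x within {a..b})"
    using d unfolding has_field_derivative_iff by (rule tendsto_rabs)
  have "\<forall>\<^sub>F y in at x within {a..b}. \<bar>(f y - f x) / (y - x)\<bar> \<le> K"
    unfolding eventually_at_filter
    by (intro always_eventually allI impI) (use lip in \<open>auto simp: abs_divide divide_le_eq\<close>)
  then show ?thesis
    using tendsto_upperbound[OF lim] assms(2,3) by (simp add: trivial_limit_within islimpt_Icc)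
qed

lemma continuous_on_compact_abs_bound:
  fixes f :: "'a::metric_space \<Rightarrow> real"
  assumes "continuous_on S f" "compact S"
  obtains B where "B > 0" "\<And>p. p \<in> S \<Longrightarrow> \<bar>f p\<bar> \<le> B"
  using compact_imp_bounded[OF compact_continuous_image[OF assms]] unfolding bounded_pos by auto

lemma continuous_on_curry1:
  assumes "continuous_on (A \<times> B) (\<lambda>(t, x). f t x)" "t \<in> A"
  shows "continuous_on B (f t)"
proof -
  have "continuous_on B (\<lambda>x. (\<lambda>(t, x). f t x) (t, x))"
    by (rule continuous_on_compose2[OF assms(1)]) (use assms(2) in \<open>auto intro!: continuous_intros\<close>)
  then show ?thesis by simp
qed

lemma continuous_on_curry2:
  assumes "continuous_on (A \<times> B) (\<lambda>(t, x). f t x)" "x \<in> B"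
  shows "continuous_on A (\<lambda>t. f t x)"
proof -
  have "continuous_on A (\<lambda>t. (\<lambda>(t, x). f t x) (t, x))"
    by (rule continuous_on_compose2[OF assms(1)]) (use assms(2) in \<open>auto intro!: continuous_intros\<close>)
  then show ?thesis by simp
qed

lemma continuous_on_curried_comp:
  assumes "continuous_on A (\<lambda>(t, x). F t x)" "continuous_on D f" "continuous_on D g"
    and "\<And>q. q \<in> D \<Longrightarrow> (f q, g q) \<in> A"
  shows "continuous_on D (\<lambda>q. F (f q) (g q))"
proof -
  have "(\<lambda>q. (f q, g q)) ` D \<subseteq> A" using assms(4) by auto
  from continuous_on_compose2[OF assms(1) continuous_on_Pair[OF assms(2,3)] this]
  show ?thesis by (simp add: case_prod_beta)
qed

lemma integral_forward_difference_le:
  fixes E :: "real \<Rightarrow> real"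
  assumes E: "continuous_on {0..T} E" and h: "0 < h" "2 * h \<le> T"
    and nonneg: "\<And>t. t \<in> {0..h} \<Longrightarrow> 0 \<le> E t" and bound: "\<And>t. t \<in> {T - h..T} \<Longrightarrow> E t \<le> B"
  shows "integral {0..T - h} (\<lambda>t. E (t + h) - E t) \<le> h * B"
proof -
  have int: "E integrable_on {a..b}" if "0 \<le> a" "b \<le> T" for a b
    using that by (intro integrable_continuous_real continuous_on_subset[OF E]) auto
  have shift: "integral {0..T - h} (\<lambda>t. E (t + h)) = integral {h..T} E"
    using integral_shift[of 0 h "T - h" E] continuous_on_subset[OF E, of "{h..T}"] h
    by (simp add: o_def)
  have int_shift: "(\<lambda>t. E (t + h)) integrable_on {0..T - h}"
    using h by (intro integrable_continuous_real continuous_on_compose2[OF E]) (auto intro!: continuous_intros)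
  have "integral {0..T - h} (\<lambda>t. E (t + h) - E t)
      = integral {0..T - h} (\<lambda>t. E (t + h)) - integral {0..T - h} E"
    using h by (intro integral_diff int_shift int) auto
  also have "\<dots> = integral {T - h..T} E - integral {0..h} E"
    unfolding shift
    using Henstock_Kurzweil_Integration.integral_combine[of h "T - h" T E]
      Henstock_Kurzweil_Integration.integral_combine[of 0 h "T - h" E] int h by simp
  also have "\<dots> \<le> h * B - 0"
  proof (rule diff_mono)
    show "integral {T - h..T} E \<le> h * B"
      using integral_le[OF int integrable_const_ivl, of "T - h" T B] bound h by auto
    show "0 \<le> integral {0..h} E"
      using integral_nonneg[OF int, of 0 h] nonneg h by auto
  qed
  finally show ?thesis by simp
qed

text \<open>The conditions at a negative minimum \<open>a = m\<close> of \<open>\<psi> m\<close>, written with \<open>P0 = \<psi>\<close>,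
  \<open>P1 = \<psi>'\<close>, \<open>\<psi>'' = -2\<close>, \<open>p = m\<^sub>x\<close>, \<open>q = m\<^sub>x\<^sub>x\<close>, \<open>w = m\<^sub>t\<close>, \<open>s = \<sigma>\<^sup>2\<close>: vanishing and
  nonnegative second derivative of \<open>\<psi> m\<close>, nonpositive time derivative of
  \<open>exp (- lam t) \<psi> m\<close>, and the
  Fokker-Planck equation with \<open>h = u\<^sub>x\<^sub>x\<close>, \<open>g = G\<close>.\<close>
lemma weighted_min_inequality:
  fixes s P0 P1 a p q w h g lam :: real
  assumes "0 \<le> s" "0 < P0" "a < 0"
    and first_order: "P1 * a + P0 * p = 0"
    and second_order: "2 * a - 2 * P1 * p \<le> P0 * q"
    and time: "w \<le> lam * a"
    and pde: "w - s / 2 * q = - h / 2 * a + g * p"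
  shows "lam * P0\<^sup>2 \<le> s * P0 + s * P1\<^sup>2 - h * P0\<^sup>2 / 2 - g * P0 * P1"
proof -
  let ?Q = "s * P0 + s * P1\<^sup>2 - h * P0\<^sup>2 / 2 - g * P0 * P1"
  have w: "w = s / 2 * q - h / 2 * a + g * p"
    using pde by linarith
  have p: "P0 * p = - (P1 * a)"
    using first_order by linarith
  have "s / 2 * P0 * (2 * a - 2 * P1 * p) \<le> s / 2 * P0 * (P0 * q)"
    by (rule mult_left_mono[OF second_order]) (use assms(1,2) in simp)
  then have "s * P0 * a - s * P1 * (P0 * p) - h / 2 * P0\<^sup>2 * a + g * P0 * (P0 * p) \<le> P0\<^sup>2 * w"
    unfolding w by (simp add: power2_eq_square algebra_simps)
  then have "a * ?Q \<le> P0\<^sup>2 * w"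
    unfolding p by (simp add: power2_eq_square algebra_simps)
  also have "\<dots> \<le> a * (lam * P0\<^sup>2)"
    using mult_left_mono[OF time, of "P0\<^sup>2"] by (simp add: algebra_simps)
  finally show ?thesis
    using \<open>a < 0\<close> by (simp add: mult_le_cancel_left)
qed

lemma weighted_min_coefficient_bound:
  fixes s P0 P1 h g :: real
  assumes s: "0 \<le> s" "s \<le> 1" and P0: "0 \<le> P0" "P0 \<le> P" and P1: "\<bar>P1\<bar> \<le> L"
    and h: "\<bar>h\<bar> \<le> Bh" and g: "\<bar>g\<bar> \<le> Bg"
  shows "s * P0 + s * P1\<^sup>2 - h * P0\<^sup>2 / 2 - g * P0 * P1 \<le> P + L\<^sup>2 + Bh * P\<^sup>2 / 2 + Bg * P * L"
proof -
  have "s * P0 \<le> P"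
    using mult_right_mono[OF s(2) P0(1)] P0 by simp
  moreover have "s * P1\<^sup>2 \<le> L\<^sup>2"
    using mult_right_mono[OF s(2), of "P1\<^sup>2"] power_mono[OF P1, of 2] by simp
  moreover have "- h * P0\<^sup>2 \<le> Bh * P\<^sup>2"
  proof -
    have "- h * P0\<^sup>2 \<le> \<bar>h\<bar> * P0\<^sup>2"
      by (intro mult_right_mono) auto
    also have "\<dots> \<le> Bh * P\<^sup>2"
      using h P0 by (intro mult_mono power_mono) auto
    finally show ?thesis .
  qed
  moreover have "- g * P0 * P1 \<le> Bg * P * L"
  proof -
    have "- g * P0 * P1 \<le> \<bar>g\<bar> * P0 * \<bar>P1\<bar>"
      using abs_ge_self[of "- g * P0 * P1"] P0(1) by (simp add: abs_mult)
    also have "\<dots> \<le> Bg * P * L"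
      using g P0 P1 by (intro mult_mono) auto
    finally show ?thesis .
  qed
  ultimately show ?thesis by linarith
qed

lemma square_le_of_hjb:
  fixes a X v g M s r :: real
  assumes hjb: "a = - s / 2 * X + r * v - g\<^sup>2" and "\<bar>g\<bar> \<le> M"
  shows "a\<^sup>2 \<le> s * (- X * a) + 2 * r * (v * a) + M ^ 4"
proof -
  define A where "A = s * (- X * a) + 2 * r * (v * a)"
  have "a\<^sup>2 = a * (- s / 2 * X + r * v - g\<^sup>2)"
    using hjb by (simp add: power2_eq_square)
  then have "a\<^sup>2 = A / 2 - g\<^sup>2 * a"
    by (simp add: A_def algebra_simps)
  moreover have "- (g\<^sup>2 * a) \<le> (g ^ 4 + a\<^sup>2) / 2"
    using zero_le_power2[of "g\<^sup>2 + a"] by (simp add: power2_eq_square power4_eq_xxxx algebra_simps)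
  moreover have "g ^ 4 \<le> M ^ 4"
    using power_mono[OF \<open>\<bar>g\<bar> \<le> M\<close>, of 4] by (simp add: power_even_abs)
  ultimately have "a\<^sup>2 \<le> A + M ^ 4" by argo
  then show ?thesis by (simp add: A_def)
qed

locale mfg_solution =
  fixes L T r \<epsilon> \<sigma> K :: real and uT m0 :: "real \<Rightarrow> real"
    and u ut ux uxx m mt mx mxx :: "real \<Rightarrow> real \<Rightarrow> real"
  assumes L: "0 < L" and T: "0 < T" and r: "0 < r" and eps: "0 < \<epsilon>"
    and sigma: "0 < \<sigma>" "\<sigma> \<le> 1"
    and solution: "classical_solution L T r \<epsilon> \<sigma> uT m0 u ut ux uxx m mt mx mxx"
    and m0_nonneg: "\<And>x. x \<in> {0..L} \<Longrightarrow> 0 \<le> m0 x" and m0_mass: "integral {0..L} m0 = 1"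
    and K: "0 < K"
    and uT_lipschitz: "\<And>x y. x \<in> {0..L} \<Longrightarrow> y \<in> {0..L} \<Longrightarrow> \<bar>uT x - uT y\<bar> \<le> K * \<bar>x - y\<bar>"
begin

abbreviation "S \<equiv> {0..T} \<times> {0..L}"
abbreviation "G \<equiv> Gfun \<epsilon> L ux m"

lemma cont_u: "continuous_on S (\<lambda>(t, x). u t x)"
  and cont_ut: "continuous_on S (\<lambda>(t, x). ut t x)"
  and cont_ux: "continuous_on S (\<lambda>(t, x). ux t x)"
  and cont_uxx: "continuous_on S (\<lambda>(t, x). uxx t x)"
  and cont_m: "continuous_on S (\<lambda>(t, x). m t x)"
  and cont_mt: "continuous_on S (\<lambda>(t, x). mt t x)"
  using solution unfolding classical_solution_def by auto

lemma cont_slice: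
  assumes "t \<in> {0..T}"
  shows "continuous_on {0..L} (u t)" "continuous_on {0..L} (ut t)" "continuous_on {0..L} (ux t)"
    "continuous_on {0..L} (uxx t)" "continuous_on {0..L} (m t)"
  using assms by (auto intro: continuous_on_curry1 cont_u cont_ut cont_ux cont_uxx cont_m)

lemma partial_derivatives:
  assumes "t \<in> {0..T}" "x \<in> {0..L}"
  shows u_deriv_t: "((\<lambda>s. u s x) has_real_derivative ut t x) (at t within {0..T})"
    and u_deriv_x: "(u t has_real_derivative ux t x) (at x within {0..L})"
    and ux_deriv_x: "(ux t has_real_derivative uxx t x) (at x within {0..L})"
    and m_deriv_t: "((\<lambda>s. m s x) has_real_derivative mt t x) (at t within {0..T})"
    and m_deriv_x: "(m t has_real_derivative mx t x) (at x within {0..L})"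
    and mx_deriv_x: "(mx t has_real_derivative mxx t x) (at x within {0..L})"
  using solution assms unfolding classical_solution_def by auto

lemma partial_derivatives_interior:
  assumes "t \<in> {0..T}" "x \<in> {0<..<L}"
  shows u_deriv_x_at: "(u t has_real_derivative ux t x) (at x)"
    and ux_deriv_x_at: "(ux t has_real_derivative uxx t x) (at x)"
    and m_deriv_x_at: "(m t has_real_derivative mx t x) (at x)"
    and mx_deriv_x_at: "(mx t has_real_derivative mxx t x) (at x)"
  using partial_derivatives[OF assms(1), of x] assms(2) at_within_Icc_at[of 0 x L] by auto

lemma u_deriv_t_at:
  assumes "t \<in> {0<..<T}" "x \<in> {0..L}"
  shows "((\<lambda>s. u s x) has_real_derivative ut t x) (at t)"
  using u_deriv_t[of t x] assms at_within_Icc_at[of 0 t T] by auto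

lemma hjb:
  assumes "t \<in> {0<..<T}" "x \<in> {0<..<L}"
  shows "ut t x + \<sigma>\<^sup>2 / 2 * uxx t x - r * u t x + (G t x)\<^sup>2 = 0"
  using solution assms unfolding classical_solution_def by auto

lemma fokker_planck:
  assumes "t \<in> {0<..<T}" "x \<in> {0<..<L}"
  shows "((\<lambda>y. G t y * m t y) has_real_derivative mt t x - \<sigma>\<^sup>2 / 2 * mxx t x) (at x)"
  using solution assms unfolding classical_solution_def by auto

lemma m_initial: "x \<in> {0..L} \<Longrightarrow> m 0 x = m0 x"
  and u_terminal: "x \<in> {0..L} \<Longrightarrow> u T x = uT x"
  using solution unfolding classical_solution_def by auto

lemma ux_boundary: "t \<in> {0..T} \<Longrightarrow> ux t 0 = 0" "t \<in> {0..T} \<Longrightarrow> ux t L = 0"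
  using solution unfolding classical_solution_def by auto

lemma m_flux_boundary:
  "t \<in> {0..T} \<Longrightarrow> \<sigma>\<^sup>2 / 2 * mx t 0 + G t 0 * m t 0 = 0"
  "t \<in> {0..T} \<Longrightarrow> \<sigma>\<^sup>2 / 2 * mx t L + G t L * m t L = 0"
  using solution unfolding classical_solution_def by auto

lemma lipschitz_gap_max_not_at_boundary:
  assumes t0: "t0 \<in> {0..T}" and "0 \<le> y0" "y0 < x0" "x0 \<le> L"
    and max: "\<And>x y. 0 \<le> y \<Longrightarrow> y \<le> x \<Longrightarrow> x \<le> L \<Longrightarrow>
      s * (u t0 x - u t0 y) - K * (x - y) \<le> s * (u t0 x0 - u t0 y0) - K * (x0 - y0)"
  shows "0 < y0" and "x0 < L"
proof -
  show "x0 < L"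
  proof (rule ccontr)
    assume "\<not> x0 < L"
    then have x0: "x0 = L" using \<open>x0 \<le> L\<close> by simp
    have "((\<lambda>\<xi>. s * (u t0 \<xi> - u t0 y0) - K * (\<xi> - y0)) has_real_derivative s * ux t0 L - K) (at L within {y0..L})"
      using u_deriv_x[OF t0, of L] L \<open>0 \<le> y0\<close>
      by (auto intro!: derivative_eq_intros intro: DERIV_subset)
    then have "0 \<le> s * ux t0 L - K"
      by (rule DERIV_max_right_endpoint_nonneg) (use assms x0 in auto)
    then show False using ux_boundary(2)[OF t0] K by simp
  qed
  show "0 < y0"
  proof (rule ccontr)
    assume "\<not> 0 < y0"
    then have y0: "y0 = 0" using \<open>0 \<le> y0\<close> by simp
    have "((\<lambda>\<eta>. s * (u t0 x0 - u t0 \<eta>) - K * (x0 - \<eta>)) has_real_derivative K - s * ux t0 0) (at 0 within {0..x0})"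
      using u_deriv_x[OF t0, of 0] L \<open>x0 \<le> L\<close>
      by (auto intro!: derivative_eq_intros intro: DERIV_subset)
    then have "K - s * ux t0 0 \<le> 0"
      by (rule DERIV_max_left_endpoint_nonpos) (use assms y0 in auto)
    then show False using ux_boundary(1)[OF t0] K by simp
  qed
qed

lemma lipschitz_gap_max_space:
  assumes "s \<noteq> 0" and t0: "t0 \<in> {0..T}" and "0 < y0" "y0 < x0" "x0 < L"
    and max: "\<And>x y. 0 \<le> y \<Longrightarrow> y \<le> x \<Longrightarrow> x \<le> L \<Longrightarrow>
      s * (u t0 x - u t0 y) - K * (x - y) \<le> s * (u t0 x0 - u t0 y0) - K * (x0 - y0)"
  shows "ux t0 x0 = ux t0 y0" and "s * (uxx t0 x0 - uxx t0 y0) \<le> 0"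
proof -
  define d where "d = min y0 (L - x0)"
  have "0 < d" using assms by (simp add: d_def)
  have shifted: "e + x0 \<in> {0<..<L}" "e + y0 \<in> {0<..<L}" if "\<bar>e\<bar> < d" for e
    using that assms by (auto simp: d_def)
  \<comment> \<open>moving both points by the same amount keeps \<open>x - y\<close>, so the gap has a local maximum in \<open>e\<close> at \<open>e = 0\<close>\<close>
  have gap_deriv: "((\<lambda>e. s * (u t0 (e + x0) - u t0 (e + y0))) has_real_derivative
      s * (ux t0 (e + x0) - ux t0 (e + y0))) (at e)" if "\<bar>e - 0\<bar> < d" for e
    using shifted[of e] that u_deriv_x_at[OF t0]
    by (auto intro!: derivative_eq_intros simp: DERIV_shift[symmetric])
  have gap_max: "s * (u t0 (e + x0) - u t0 (e + y0)) \<le> s * (u t0 (0 + x0) - u t0 (0 + y0))"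
    if "\<bar>e - 0\<bar> < d" for e
  proof -
    have "s * (u t0 (e + x0) - u t0 (e + y0)) - K * ((e + x0) - (e + y0))
        \<le> s * (u t0 x0 - u t0 y0) - K * (x0 - y0)"
      by (rule max) (use shifted[of e] that assms in auto)
    then show ?thesis by simp
  qed
  have gap_deriv2: "((\<lambda>e. s * (ux t0 (e + x0) - ux t0 (e + y0))) has_real_derivative
      s * (uxx t0 (0 + x0) - uxx t0 (0 + y0))) (at 0)"
    using shifted[of 0] \<open>0 < d\<close> ux_deriv_x_at[OF t0]
    by (auto intro!: derivative_eq_intros simp: DERIV_shift[symmetric])
  note DERIV2_local_max[OF \<open>0 < d\<close> gap_deriv gap_max gap_deriv2]
  then show "ux t0 x0 = ux t0 y0" and "s * (uxx t0 x0 - uxx t0 y0) \<le> 0"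
    using \<open>s \<noteq> 0\<close> by auto
qed

lemma lipschitz_gap_max_interior:
  assumes "s \<noteq> 0" and t0: "t0 \<in> {0<..<T}" and "0 < y0" "y0 < x0" "x0 < L"
    and max: "\<And>t x y. t \<in> {t0..T} \<Longrightarrow> 0 \<le> y \<Longrightarrow> y \<le> x \<Longrightarrow> x \<le> L \<Longrightarrow>
      s * (u t x - u t y) - K * (x - y) \<le> s * (u t0 x0 - u t0 y0) - K * (x0 - y0)"
  shows "s * (u t0 x0 - u t0 y0) \<le> 0"
proof -
  have t0': "t0 \<in> {0..T}" using t0 by auto
  have ux_eq: "ux t0 x0 = ux t0 y0" and uxx_le: "s * (uxx t0 x0 - uxx t0 y0) \<le> 0"
    using lipschitz_gap_max_space[OF \<open>s \<noteq> 0\<close> t0' \<open>0 < y0\<close> \<open>y0 < x0\<close> \<open>x0 < L\<close>] max[of t0] t0 by auto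
  have "((\<lambda>t. s * (u t x0 - u t y0) - K * (x0 - y0)) has_real_derivative s * (ut t0 x0 - ut t0 y0))
      (at t0 within {t0..T})"
    using u_deriv_t[OF t0', of x0] u_deriv_t[OF t0', of y0] assms
    by (auto intro!: derivative_eq_intros intro: DERIV_subset)
  then have ut_le: "s * (ut t0 x0 - ut t0 y0) \<le> 0"
    by (rule DERIV_max_left_endpoint_nonpos) (use assms in auto)
  have "G t0 x0 = G t0 y0" unfolding Gfun_def ux_eq ..
  then have "ut t0 x0 + \<sigma>\<^sup>2 / 2 * uxx t0 x0 - r * u t0 x0 = ut t0 y0 + \<sigma>\<^sup>2 / 2 * uxx t0 y0 - r * u t0 y0"
    using hjb[OF t0, of x0] hjb[OF t0, of y0] assms by simp
  then have "s * ((ut t0 x0 + \<sigma>\<^sup>2 / 2 * uxx t0 x0 - r * u t0 x0) - (ut t0 y0 + \<sigma>\<^sup>2 / 2 * uxx t0 y0 - r * u t0 y0)) = 0"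
    by simp
  then have "s * (ut t0 x0 - ut t0 y0) + \<sigma>\<^sup>2 / 2 * (s * (uxx t0 x0 - uxx t0 y0)) = r * (s * (u t0 x0 - u t0 y0))"
    by (simp add: algebra_simps)
  moreover have "\<sigma>\<^sup>2 / 2 * (s * (uxx t0 x0 - uxx t0 y0)) \<le> 0"
    using uxx_le by (simp add: mult_nonneg_nonpos)
  ultimately have "r * (s * (u t0 x0 - u t0 y0)) \<le> 0" using ut_le by linarith
  then show ?thesis using r by (simp add: mult_le_0_iff)
qed

lemma lipschitz_gap_nonpos:
  assumes s: "\<bar>s\<bar> = 1" and \<tau>: "0 < \<tau>" and t: "t \<in> {\<tau>..T}"
    and xy: "0 \<le> y" "y \<le> x" "x \<le> L"
  shows "s * (u t x - u t y) \<le> K * (x - y)"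
proof -
  define D where "D = {\<tau>..T} \<times> ({0..L} \<times> {0..L} \<inter> {p. snd p \<le> fst p})"
  define gap where "gap q = s * (u (fst q) (fst (snd q)) - u (fst q) (snd (snd q))) - K * (fst (snd q) - snd (snd q))"
    for q :: "real \<times> real \<times> real"
  have "compact D" unfolding D_def
    by (intro compact_Times compact_Int_closed closed_Collect_le continuous_intros) auto
  moreover have "(t, x, y) \<in> D" using t xy unfolding D_def by auto
  moreover have "continuous_on D gap"
    unfolding gap_def using \<tau>
    by (intro continuous_intros continuous_on_curried_comp[OF cont_u]) (auto simp: D_def)
  ultimately obtain q0 where "q0 \<in> D" and q0_max: "\<And>q. q \<in> D \<Longrightarrow> gap q \<le> gap q0"
    using continuous_attains_sup[of D gap] by blast
  then obtain t0 x0 y0 where q0: "q0 = (t0, x0, y0)" and t0: "t0 \<in> {\<tau>..T}"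
    and x0y0: "0 \<le> y0" "y0 \<le> x0" "x0 \<le> L"
    unfolding D_def by auto
  have max: "s * (u t' x' - u t' y') - K * (x' - y') \<le> s * (u t0 x0 - u t0 y0) - K * (x0 - y0)"
    if "t' \<in> {\<tau>..T}" "0 \<le> y'" "y' \<le> x'" "x' \<le> L" for t' x' y'
    using q0_max[of "(t', x', y')"] that unfolding D_def gap_def q0 by auto
  have "gap q0 \<le> 0"
  proof (rule ccontr)
    assume pos: "\<not> gap q0 \<le> 0"
    then have "y0 < x0" using x0y0 by (cases "y0 = x0") (auto simp: gap_def q0)
    have "t0 < T"
    proof (rule ccontr)
      assume "\<not> t0 < T"
      then have "gap q0 = s * (uT x0 - uT y0) - K * (x0 - y0)"
        using t0 x0y0 u_terminal by (simp add: gap_def q0)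
      also have "\<dots> \<le> \<bar>uT x0 - uT y0\<bar> - K * \<bar>x0 - y0\<bar>"
        using s x0y0 abs_ge_self[of "s * (uT x0 - uT y0)"] by (simp add: abs_mult)
      also have "\<dots> \<le> 0" using uT_lipschitz[of x0 y0] x0y0 by simp
      finally show False using pos by simp
    qed
    have "0 < y0" "x0 < L"
      using lipschitz_gap_max_not_at_boundary[of t0 y0 x0 s] max[of t0] t0 \<tau> x0y0 \<open>y0 < x0\<close> by auto
    then have "s * (u t0 x0 - u t0 y0) \<le> 0"
      using lipschitz_gap_max_interior[of s t0 y0 x0] max t0 \<tau> s \<open>y0 < x0\<close> \<open>t0 < T\<close> by auto
    with pos mult_pos_pos[OF K, of "x0 - y0"] \<open>y0 < x0\<close> show False by (simp add: gap_def q0)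
  qed
  then show ?thesis using max[OF t xy] by (simp add: gap_def q0)
qed

lemma u_lipschitz_x:
  assumes t: "t \<in> {0<..T}" and x: "x \<in> {0..L}" and y: "y \<in> {0..L}"
  shows "\<bar>u t x - u t y\<bar> \<le> K * \<bar>x - y\<bar>"
proof -
  have gap: "s * (u t x' - u t y') \<le> K * (x' - y')"
    if "\<bar>s\<bar> = 1" "x' \<in> {0..L}" "y' \<in> {0..L}" "y' \<le> x'" for s x' y'
    using lipschitz_gap_nonpos[OF that(1), of t t y' x'] t that by auto
  show ?thesis
  proof (cases "y \<le> x")
    case True
    then show ?thesis using gap[of 1 x y] gap[of "-1" x y] x y by auto
  next
    case False
    then show ?thesis using gap[of 1 y x] gap[of "-1" y x] x y by auto
  qed
qed

lemma ux_bound: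
  assumes t: "t \<in> {0<..T}" and x: "x \<in> {0..L}"
  shows "\<bar>ux t x\<bar> \<le> K"
proof (rule DERIV_abs_le_of_lipschitz[OF _ L x])
  show "(u t has_real_derivative ux t x) (at x within {0..L})"
    using u_deriv_x t x by auto
  show "\<bar>u t y - u t x\<bar> \<le> K * \<bar>y - x\<bar>" if "y \<in> {0..L}" for y
    using u_lipschitz_x[OF t that x] .
qed

lemma drift_bound:
  assumes t: "t \<in> {0<..T}" and x: "x \<in> {0..L}"
    and J: "\<bar>integral {0..L} (\<lambda>y. ux t y * m t y)\<bar> \<le> J"
  shows "\<bar>G t x\<bar> \<le> (1 + J + K) / 2"
proof -
  have b: "0 < bcoef \<epsilon>" "bcoef \<epsilon> \<le> 1" and c: "0 < ccoef \<epsilon>" "ccoef \<epsilon> \<le> 1"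
    using eps by (auto simp: bcoef_def ccoef_def)
  have "\<bar>ccoef \<epsilon> * integral {0..L} (\<lambda>y. ux t y * m t y)\<bar> \<le> J"
    using mult_right_mono[OF c(2) abs_ge_zero] J c(1) by (simp add: abs_mult) (smt (verit))
  then show ?thesis
    using ux_bound[OF t x] b unfolding Gfun_def by (simp add: abs_divide)
qed

text \<open>The weight \<open>\<psi>\<close> of the minimum principle for \<open>m\<close>: it is at least \<open>\<delta> > 0\<close>, and
  \<open>\<psi>'(0) = L = - \<psi>'(L)\<close> is what turns the no-flux condition into a contradiction at a
  boundary minimum.\<close>
definition weight :: "real \<Rightarrow> real \<Rightarrow> real" where
  "weight \<delta> \<xi> = \<xi> * (L - \<xi>) + \<delta>"

lemma weight_bounds:
  assumes "\<xi> \<in> {0..L}"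
  shows "\<delta> \<le> weight \<delta> \<xi>" and "weight \<delta> \<xi> \<le> L\<^sup>2 + \<delta>"
  using assms mult_mono[of \<xi> L "L - \<xi>" L] by (auto simp: weight_def power2_eq_square)

lemma weight_deriv:
  "((\<lambda>\<xi>. weight \<delta> \<xi> * f \<xi>) has_real_derivative (L - 2 * x) * f x + weight \<delta> x * f')
    (at x within A)" if "(f has_real_derivative f') (at x within A)"
  using that unfolding weight_def by (auto intro!: derivative_eq_intros simp: algebra_simps)

lemma weighted_min_time:
  assumes t0: "t0 \<in> {0<..T}" and x0: "x0 \<in> {0..L}" and "0 < w"
    and min: "\<And>s. s \<in> {0..t0} \<Longrightarrow> exp (- (lam * t0)) * w * m t0 x0 \<le> exp (- (lam * s)) * w * m s x0"
  shows "mt t0 x0 \<le> lam * m t0 x0"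
proof -
  have "((\<lambda>s. m s x0) has_real_derivative mt t0 x0) (at t0 within {0..t0})"
    using m_deriv_t[of t0 x0] t0 x0 by (auto intro: DERIV_subset)
  then have "((\<lambda>s. - (exp (- (lam * s)) * w * m s x0)) has_real_derivative
      - (exp (- (lam * t0)) * w * (mt t0 x0 - lam * m t0 x0))) (at t0 within {0..t0})"
    by (auto intro!: derivative_eq_intros simp: algebra_simps)
  then have "0 \<le> - (exp (- (lam * t0)) * w * (mt t0 x0 - lam * m t0 x0))"
    by (rule DERIV_max_right_endpoint_nonneg) (use min t0 in auto)
  then show ?thesis
    using \<open>0 < w\<close> by (simp add: mult_le_0_iff)
qed

lemma weighted_min_not_at_left_end:
  assumes t0: "t0 \<in> {0..T}" and "0 < \<delta>" and neg: "m t0 0 < 0"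
    and min: "\<And>\<xi>. \<xi> \<in> {0..L} \<Longrightarrow> weight \<delta> 0 * m t0 0 \<le> weight \<delta> \<xi> * m t0 \<xi>"
    and G: "\<delta> * \<bar>G t0 0\<bar> < \<sigma>\<^sup>2 * L / 2"
  shows False
proof -
  have flux: "\<sigma>\<^sup>2 / 2 * mx t0 0 = - (G t0 0 * m t0 0)"
    using m_flux_boundary(1)[OF t0] by linarith
  have "((\<lambda>\<xi>. - (weight \<delta> \<xi> * m t0 \<xi>)) has_real_derivative - (L * m t0 0 + \<delta> * mx t0 0))
      (at 0 within {0..L})"
    using DERIV_minus[OF weight_deriv[OF m_deriv_x[OF t0, of 0]]] L by (simp add: weight_def)
  then have "- (L * m t0 0 + \<delta> * mx t0 0) \<le> 0"
    by (rule DERIV_max_left_endpoint_nonpos[OF _ L]) (use min in \<open>auto simp: weight_def\<close>)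
  then have "0 \<le> \<sigma>\<^sup>2 / 2 * (L * m t0 0 + \<delta> * mx t0 0)" by simp
  also have "\<dots> = \<sigma>\<^sup>2 * L / 2 * m t0 0 + \<delta> * (\<sigma>\<^sup>2 / 2 * mx t0 0)"
    by (simp add: algebra_simps)
  also have "\<dots> = m t0 0 * (\<sigma>\<^sup>2 * L / 2 - \<delta> * G t0 0)"
    unfolding flux by (simp add: algebra_simps)
  also have "\<dots> < 0"
  proof (rule mult_neg_pos[OF neg])
    have "\<delta> * G t0 0 \<le> \<delta> * \<bar>G t0 0\<bar>" using \<open>0 < \<delta>\<close> by (intro mult_left_mono) auto
    then show "0 < \<sigma>\<^sup>2 * L / 2 - \<delta> * G t0 0" using G by linarith
  qed
  finally show False by simp
qed

lemma weighted_min_not_at_right_end: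
  assumes t0: "t0 \<in> {0..T}" and "0 < \<delta>" and neg: "m t0 L < 0"
    and min: "\<And>\<xi>. \<xi> \<in> {0..L} \<Longrightarrow> weight \<delta> L * m t0 L \<le> weight \<delta> \<xi> * m t0 \<xi>"
    and G: "\<delta> * \<bar>G t0 L\<bar> < \<sigma>\<^sup>2 * L / 2"
  shows False
proof -
  have flux: "\<sigma>\<^sup>2 / 2 * mx t0 L = - (G t0 L * m t0 L)"
    using m_flux_boundary(2)[OF t0] by linarith
  have "((\<lambda>\<xi>. - (weight \<delta> \<xi> * m t0 \<xi>)) has_real_derivative - (- L * m t0 L + \<delta> * mx t0 L))
      (at L within {0..L})"
    using DERIV_minus[OF weight_deriv[OF m_deriv_x[OF t0, of L]]] L by (simp add: weight_def)
  then have "0 \<le> - (- L * m t0 L + \<delta> * mx t0 L)"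
    by (rule DERIV_max_right_endpoint_nonneg[OF _ L]) (use min in \<open>auto simp: weight_def\<close>)
  then have "0 \<le> \<sigma>\<^sup>2 / 2 * (L * m t0 L - \<delta> * mx t0 L)" by simp
  also have "\<dots> = \<sigma>\<^sup>2 * L / 2 * m t0 L - \<delta> * (\<sigma>\<^sup>2 / 2 * mx t0 L)"
    by (simp add: algebra_simps)
  also have "\<dots> = m t0 L * (\<sigma>\<^sup>2 * L / 2 + \<delta> * G t0 L)"
    unfolding flux by (simp add: algebra_simps)
  also have "\<dots> < 0"
  proof (rule mult_neg_pos[OF neg])
    have "\<delta> * (- G t0 L) \<le> \<delta> * \<bar>G t0 L\<bar>" using \<open>0 < \<delta>\<close> by (intro mult_left_mono) auto
    then show "0 < \<sigma>\<^sup>2 * L / 2 + \<delta> * G t0 L" using G by linarith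
  qed
  finally show False by simp
qed

lemma weighted_min_interior:
  assumes t0: "t0 \<in> {0<..<T}" and x0: "x0 \<in> {0<..<L}" and "0 < \<delta>" and neg: "m t0 x0 < 0"
    and min: "\<And>\<xi>. \<xi> \<in> {0..L} \<Longrightarrow> weight \<delta> x0 * m t0 x0 \<le> weight \<delta> \<xi> * m t0 \<xi>"
    and time: "mt t0 x0 \<le> lam * m t0 x0"
  shows "lam * (weight \<delta> x0)\<^sup>2 \<le> \<sigma>\<^sup>2 * weight \<delta> x0 + \<sigma>\<^sup>2 * (L - 2 * x0)\<^sup>2
    - uxx t0 x0 * (weight \<delta> x0)\<^sup>2 / 2 - G t0 x0 * weight \<delta> x0 * (L - 2 * x0)"
proof -
  have t0': "t0 \<in> {0..T}" using t0 by auto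
  define d where "d = min x0 (L - x0)"
  have "0 < d" using x0 by (simp add: d_def)
  have near: "\<xi> \<in> {0<..<L}" if "\<bar>\<xi> - x0\<bar> < d" for \<xi>
    using that by (auto simp: d_def)
  define dw where "dw \<xi> = (L - 2 * \<xi>) * m t0 \<xi> + weight \<delta> \<xi> * mx t0 \<xi>" for \<xi>
  have deriv: "((\<lambda>\<xi>. - (weight \<delta> \<xi> * m t0 \<xi>)) has_real_derivative - dw \<xi>) (at \<xi>)"
    if "\<bar>\<xi> - x0\<bar> < d" for \<xi>
    using DERIV_minus[OF weight_deriv[OF m_deriv_x_at[OF t0' near[OF that]]]] by (simp add: dw_def)
  have max: "- (weight \<delta> \<xi> * m t0 \<xi>) \<le> - (weight \<delta> x0 * m t0 x0)" if "\<bar>\<xi> - x0\<bar> < d" for \<xi>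
    using min[of \<xi>] near[OF that] by auto
  have deriv2: "((\<lambda>\<xi>. - dw \<xi>) has_real_derivative
      - (- 2 * m t0 x0 + 2 * (L - 2 * x0) * mx t0 x0 + weight \<delta> x0 * mxx t0 x0)) (at x0)"
    using m_deriv_x_at[OF t0' x0] mx_deriv_x_at[OF t0' x0] unfolding dw_def weight_def
    by (auto intro!: derivative_eq_intros simp: algebra_simps)
  note second_order = DERIV2_local_max[OF \<open>0 < d\<close> deriv max deriv2]
  have fp: "mt t0 x0 - \<sigma>\<^sup>2 / 2 * mxx t0 x0 = - uxx t0 x0 / 2 * m t0 x0 + G t0 x0 * mx t0 x0"
  proof (rule DERIV_unique[OF fokker_planck[OF t0 x0]])
    show "((\<lambda>y. G t0 y * m t0 y) has_real_derivative - uxx t0 x0 / 2 * m t0 x0 + G t0 x0 * mx t0 x0) (at x0)"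
      using ux_deriv_x_at[OF t0' x0] m_deriv_x_at[OF t0' x0] unfolding Gfun_def
      by (auto intro!: derivative_eq_intros simp: field_simps)
  qed
  show ?thesis
  proof (rule weighted_min_inequality[where a = "m t0 x0" and p = "mx t0 x0" and q = "mxx t0 x0" and w = "mt t0 x0"])
    show "0 < weight \<delta> x0" using weight_bounds(1)[of x0 \<delta>] x0 \<open>0 < \<delta>\<close> by auto
    show "(L - 2 * x0) * m t0 x0 + weight \<delta> x0 * mx t0 x0 = 0"
      using second_order(1) by (simp add: dw_def)
    show "2 * m t0 x0 - 2 * (L - 2 * x0) * mx t0 x0 \<le> weight \<delta> x0 * mxx t0 x0"
      using second_order(2) by linarith
  qed (use neg time fp in auto)
qed

lemma weighted_min_nonneg:
  assumes t0: "t0 \<in> {0<..<T}" and x0: "x0 \<in> {0..L}" and "0 < \<delta>" and "0 \<le> lam"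
    and min: "\<And>\<xi>. \<xi> \<in> {0..L} \<Longrightarrow> weight \<delta> x0 * m t0 x0 \<le> weight \<delta> \<xi> * m t0 \<xi>"
    and time: "mt t0 x0 \<le> lam * m t0 x0"
    and G: "\<And>\<xi>. \<xi> \<in> {0..L} \<Longrightarrow> \<bar>G t0 \<xi>\<bar> \<le> Mg" and \<delta>_Mg: "\<delta> * Mg < \<sigma>\<^sup>2 * L / 2"
    and uxx: "\<bar>uxx t0 x0\<bar> \<le> Bxx"
    and lam: "(L\<^sup>2 + \<delta>) + L\<^sup>2 + Bxx * (L\<^sup>2 + \<delta>)\<^sup>2 / 2 + Mg * (L\<^sup>2 + \<delta>) * L < lam * \<delta>\<^sup>2"
  shows "0 \<le> m t0 x0"
proof (rule ccontr)
  assume "\<not> 0 \<le> m t0 x0"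
  then have neg: "m t0 x0 < 0" by simp
  have t0': "t0 \<in> {0..T}" using t0 by auto
  have \<delta>_G: "\<delta> * \<bar>G t0 \<xi>\<bar> < \<sigma>\<^sup>2 * L / 2" if "\<xi> \<in> {0..L}" for \<xi>
    using mult_left_mono[OF G[OF that], of \<delta>] \<open>0 < \<delta>\<close> \<delta>_Mg by linarith
  consider "x0 = 0" | "x0 = L" | "x0 \<in> {0<..<L}" using x0 by force
  then show False
  proof cases
    case 1
    then show False
      using weighted_min_not_at_left_end[OF t0' \<open>0 < \<delta>\<close>] neg min \<delta>_G L by auto
  next
    case 2
    then show False
      using weighted_min_not_at_right_end[OF t0' \<open>0 < \<delta>\<close>] neg min \<delta>_G L by auto
  next
    case 3
    have "lam * \<delta>\<^sup>2 \<le> lam * (weight \<delta> x0)\<^sup>2"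
      using weight_bounds(1)[OF x0, of \<delta>] \<open>0 < \<delta>\<close> \<open>0 \<le> lam\<close> by (intro mult_left_mono power_mono) auto
    also have "\<dots> \<le> \<sigma>\<^sup>2 * weight \<delta> x0 + \<sigma>\<^sup>2 * (L - 2 * x0)\<^sup>2
        - uxx t0 x0 * (weight \<delta> x0)\<^sup>2 / 2 - G t0 x0 * weight \<delta> x0 * (L - 2 * x0)"
      by (rule weighted_min_interior[OF t0 3 \<open>0 < \<delta>\<close> neg min time])
    also have "\<dots> \<le> (L\<^sup>2 + \<delta>) + L\<^sup>2 + Bxx * (L\<^sup>2 + \<delta>)\<^sup>2 / 2 + Mg * (L\<^sup>2 + \<delta>) * L"
      using sigma weight_bounds[OF x0, of \<delta>] \<open>0 < \<delta>\<close> x0 uxx G[OF x0]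
      by (intro weighted_min_coefficient_bound) (auto simp: power_le_one)
    finally show False using lam by simp
  qed
qed

lemma m_nonneg_of_bounds:
  assumes t: "t \<in> {0..<T}" and x: "x \<in> {0..L}" and "0 < \<delta>" and "0 \<le> lam"
    and G: "\<And>s \<xi>. s \<in> {0<..T} \<Longrightarrow> \<xi> \<in> {0..L} \<Longrightarrow> \<bar>G s \<xi>\<bar> \<le> Mg" and \<delta>_Mg: "\<delta> * Mg < \<sigma>\<^sup>2 * L / 2"
    and Bxx: "\<And>s \<xi>. s \<in> {0..T} \<Longrightarrow> \<xi> \<in> {0..L} \<Longrightarrow> \<bar>uxx s \<xi>\<bar> \<le> Bxx"
    and lam: "(L\<^sup>2 + \<delta>) + L\<^sup>2 + Bxx * (L\<^sup>2 + \<delta>)\<^sup>2 / 2 + Mg * (L\<^sup>2 + \<delta>) * L < lam * \<delta>\<^sup>2"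
  shows "0 \<le> m t x"
proof -
  define W where "W p = exp (- (lam * fst p)) * weight \<delta> (snd p) * m (fst p) (snd p)" for p
  have "continuous_on ({0..t} \<times> {0..L}) W"
    unfolding W_def weight_def using t
    by (intro continuous_intros continuous_on_curried_comp[OF cont_m]) auto
  moreover have "{0..t} \<times> {0..L} \<noteq> {}" using t x by auto
  ultimately obtain p0 where "p0 \<in> {0..t} \<times> {0..L}" and p0_min: "\<And>p. p \<in> {0..t} \<times> {0..L} \<Longrightarrow> W p0 \<le> W p"
    using continuous_attains_inf[OF compact_Times[OF compact_Icc compact_Icc]] by metis
  then obtain t0 x0 where p0: "p0 = (t0, x0)" and t0: "t0 \<in> {0..t}" and x0: "x0 \<in> {0..L}" by auto
  have "0 \<le> m t0 x0"
  proof (cases "t0 = 0")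
    case True
    then show ?thesis using m_initial m0_nonneg x0 by simp
  next
    case False
    then have t0': "t0 \<in> {0<..<T}" using t0 t by auto
    have "0 < weight \<delta> x0" using weight_bounds(1)[OF x0, of \<delta>] \<open>0 < \<delta>\<close> by simp
    moreover have "weight \<delta> x0 * m t0 x0 \<le> weight \<delta> \<xi> * m t0 \<xi>" if "\<xi> \<in> {0..L}" for \<xi>
      using p0_min[of "(t0, \<xi>)"] t0 that by (simp add: W_def p0 mult.assoc)
    moreover have "mt t0 x0 \<le> lam * m t0 x0"
    proof (rule weighted_min_time)
      show "exp (- (lam * t0)) * weight \<delta> x0 * m t0 x0 \<le> exp (- (lam * s)) * weight \<delta> x0 * m s x0"
        if "s \<in> {0..t0}" for s
        using p0_min[of "(s, x0)"] that t0 x0 unfolding W_def p0 by auto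
    qed (use t0' x0 \<open>0 < weight \<delta> x0\<close> in auto)
    ultimately show ?thesis
      by (intro weighted_min_nonneg[OF t0' x0 \<open>0 < \<delta>\<close> \<open>0 \<le> lam\<close>, where Mg = Mg and Bxx = Bxx])
        (use G t0' Bxx x0 \<delta>_Mg lam in auto)
  qed
  then have "0 \<le> W p0"
    using weight_bounds(1)[OF x0, of \<delta>] \<open>0 < \<delta>\<close> by (auto simp: W_def p0 intro!: mult_nonneg_nonneg)
  then have "0 \<le> W (t, x)"
    using p0_min[of "(t, x)"] t x by auto
  moreover have "0 < exp (- (lam * t)) * weight \<delta> x"
    using weight_bounds(1)[OF x, of \<delta>] \<open>0 < \<delta>\<close> by (intro mult_pos_pos) auto
  ultimately show ?thesis by (auto simp: W_def zero_le_mult_iff)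
qed

lemma drift_bound_by_sup_m:
  assumes Bm: "\<And>p. p \<in> S \<Longrightarrow> \<bar>(\<lambda>(t, x). m t x) p\<bar> \<le> Bm"
    and t: "t \<in> {0<..T}" and x: "x \<in> {0..L}"
  shows "\<bar>G t x\<bar> \<le> (1 + K * Bm * L + K) / 2"
proof (rule drift_bound[OF t x])
  have "norm (integral {0..L} (\<lambda>y. ux t y * m t y)) \<le> K * Bm * (L - 0)"
  proof (rule integral_bound)
    show "continuous_on {0..L} (\<lambda>y. ux t y * m t y)"
      using t by (intro continuous_intros cont_slice) auto
    show "norm (ux t y * m t y) \<le> K * Bm" if "y \<in> {0..L}" for y
      using ux_bound[OF t that] Bm[of "(t, y)"] t that by (auto simp: abs_mult intro: mult_mono')
  qed (use L in auto)
  then show "\<bar>integral {0..L} (\<lambda>y. ux t y * m t y)\<bar> \<le> K * Bm * L" by simp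
qed

text \<open>A small \<open>\<delta>\<close> rules out a negative minimum of \<open>weight \<delta> * m\<close> on the boundary, a large
  \<open>lam\<close> then rules it out in the interior.\<close>
lemma m_nonneg:
  assumes t: "t \<in> {0..<T}" and x: "x \<in> {0..L}"
  shows "0 \<le> m t x"
proof -
  have "compact S" by (intro compact_Times compact_Icc)
  obtain Bxx where Bxx: "\<And>p. p \<in> S \<Longrightarrow> \<bar>(\<lambda>(t, x). uxx t x) p\<bar> \<le> Bxx"
    using continuous_on_compact_abs_bound[OF cont_uxx \<open>compact S\<close>] by metis
  obtain Bm where "0 < Bm" and Bm: "\<And>p. p \<in> S \<Longrightarrow> \<bar>(\<lambda>(t, x). m t x) p\<bar> \<le> Bm"
    using continuous_on_compact_abs_bound[OF cont_m \<open>compact S\<close>] by metis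
  define Mg where "Mg = (1 + K * Bm * L + K) / 2"
  have "0 < Mg" using K \<open>0 < Bm\<close> L by (simp add: Mg_def add_pos_nonneg)
  define \<delta> where "\<delta> = \<sigma>\<^sup>2 * L / (4 * Mg)"
  have "0 < \<delta>" and "\<delta> * Mg < \<sigma>\<^sup>2 * L / 2"
    using \<open>0 < Mg\<close> sigma L by (auto simp: \<delta>_def)
  define P where "P = L\<^sup>2 + \<delta>"
  define lam where "lam = (P + L\<^sup>2 + Bxx * P\<^sup>2 / 2 + Mg * P * L + 1) / \<delta>\<^sup>2"
  have "P + L\<^sup>2 + Bxx * P\<^sup>2 / 2 + Mg * P * L < lam * \<delta>\<^sup>2"
    using \<open>0 < \<delta>\<close> by (simp add: lam_def)
  moreover have "0 \<le> lam"
    using \<open>0 < Mg\<close> \<open>0 < \<delta>\<close> L Bxx[of "(0, 0)"] T by (simp add: lam_def P_def)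
  ultimately show ?thesis
    using m_nonneg_of_bounds[OF t x \<open>0 < \<delta>\<close>, where Mg = Mg and Bxx = Bxx]
      drift_bound_by_sup_m[OF Bm] Bxx \<open>\<delta> * Mg < \<sigma>\<^sup>2 * L / 2\<close>
    by (auto simp: Mg_def P_def)
qed

lemma mt_integral_zero:
  assumes t: "t \<in> {0<..<T}"
  shows "integral {0..L} (mt t) = 0"
proof -
  have t': "t \<in> {0..T}" using t by auto
  define flux where "flux y = G t y * m t y" for y
  have "((\<lambda>y. mt t y - \<sigma>\<^sup>2 / 2 * mxx t y) has_integral (flux L - flux 0)) {0..L}"
  proof (rule fundamental_theorem_of_calculus_interior)
    show "continuous_on {0..L} flux"
      unfolding flux_def Gfun_def using t' by (intro continuous_intros cont_slice) auto
    show "(flux has_vector_derivative mt t y - \<sigma>\<^sup>2 / 2 * mxx t y) (at y)" if "y \<in> {0<..<L}" for y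
      using fokker_planck[OF t that]
      unfolding flux_def has_real_derivative_iff_has_vector_derivative[symmetric] .
  qed (use L in simp)
  moreover have "(mxx t has_integral (mx t L - mx t 0)) {0..L}"
    using mx_deriv_x[OF t'] L
    by (intro fundamental_theorem_of_calculus) (auto simp: has_real_derivative_iff_has_vector_derivative[symmetric])
  ultimately have "((\<lambda>y. (mt t y - \<sigma>\<^sup>2 / 2 * mxx t y) + \<sigma>\<^sup>2 / 2 * mxx t y) has_integral
      ((flux L - flux 0) + \<sigma>\<^sup>2 / 2 * (mx t L - mx t 0))) {0..L}"
    by (intro has_integral_add has_integral_mult_right)
  moreover have "(flux L - flux 0) + \<sigma>\<^sup>2 / 2 * (mx t L - mx t 0) = 0"
    using m_flux_boundary[OF t'] unfolding flux_def by (simp add: field_simps)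
  ultimately have "(mt t has_integral 0) {0..L}" by simp
  then show ?thesis by (rule integral_unique)
qed

lemma initial_mass: "integral {0..L} (m 0) = 1"
  using m0_mass m_initial by (metis (no_types, lifting) integral_cong)

lemma mass_conserved:
  assumes t: "t \<in> {0..<T}"
  shows "integral {0..L} (m t) = 1"
proof (cases "t = 0")
  case True
  then show ?thesis using initial_mass by simp
next
  case False
  define mass where "mass = (\<lambda>s. integral {0..L} (m s))"
  have deriv: "(mass has_real_derivative integral {0..L} (mt s)) (at s within {0..T})"
    if "s \<in> {0..T}" for s
  proof -
    have "((\<lambda>s. integral (cbox 0 L) (m s)) has_real_derivative integral (cbox 0 L) (mt s))
        (at s within {0..T})"
    proof (rule leibniz_rule_field_derivative)
      show "((\<lambda>s. m s y) has_real_derivative mt s y) (at s within {0..T})"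
        if "s \<in> {0..T}" "y \<in> cbox 0 L" for s y
        using m_deriv_t that by auto
      show "m s integrable_on cbox 0 L" if "s \<in> {0..T}" for s
        using cont_slice(5)[OF that] by (simp add: integrable_continuous_real)
      show "continuous_on ({0..T} \<times> cbox 0 L) (\<lambda>(s, y). mt s y)"
        using cont_mt by simp
    qed (use that in auto)
    then show ?thesis by (simp add: mass_def)
  qed
  have "continuous_on {0..t} mass"
    using t by (intro continuous_on_subset[OF DERIV_continuous_on[OF deriv]]) auto
  moreover have "(mass has_real_derivative 0) (at s)" if "0 < s" "s < t" for s
    using deriv[of s] mt_integral_zero[of s] at_within_Icc_at[of 0 s T] that t by auto
  ultimately have "mass t = mass 0"
    using DERIV_isconst_end[of 0 t mass] t False by auto
  then show ?thesis using initial_mass by (simp add: mass_def)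
qed

lemma drift_integral_bound:
  assumes t: "t \<in> {0<..<T}"
  shows "\<bar>integral {0..L} (\<lambda>y. ux t y * m t y)\<bar> \<le> K"
proof -
  have t': "t \<in> {0..T}" using t by auto
  have "norm (integral {0..L} (\<lambda>y. ux t y * m t y)) \<le> integral {0..L} (\<lambda>y. K * m t y)"
  proof (rule integral_norm_bound_integral)
    show "(\<lambda>y. ux t y * m t y) integrable_on {0..L}" "(\<lambda>y. K * m t y) integrable_on {0..L}"
      using t' by (auto intro!: integrable_continuous_real continuous_intros cont_slice)
    show "norm (ux t y * m t y) \<le> K * m t y" if "y \<in> {0..L}" for y
      using ux_bound[of t y] m_nonneg[of t y] t that by (simp add: abs_mult mult_right_mono)
  qed
  also have "\<dots> = K" using mass_conserved[of t] t by simp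
  finally show ?thesis by simp
qed

lemma G_bound:
  assumes "t \<in> {0<..<T}" "x \<in> {0..L}"
  shows "\<bar>G t x\<bar> \<le> (1 + 2 * K) / 2"
  using drift_bound[of t x K] drift_integral_bound[of t] assms by simp

definition energy :: "real \<Rightarrow> real" where
  "energy t = integral {0..L} (\<lambda>x. (ux t x)\<^sup>2)"

text \<open>Integrating by parts with \<open>ux = 0\<close> at both ends, \<open>energy_rate\<close> is formally half the
  time derivative of \<open>energy\<close>; since \<open>ux\<close> need not be differentiable in \<open>t\<close>, this is only
  used through difference quotients of \<open>u\<close>.\<close>
definition energy_rate :: "real \<Rightarrow> real" where
  "energy_rate t = integral {0..L} (\<lambda>x. - uxx t x * ut t x)"

lemma continuous_on_energy: "continuous_on {0..T} energy"
proof -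
  have "continuous_on ({0..T} \<times> cbox 0 L) (\<lambda>(t, x). (ux t x)\<^sup>2)"
    using continuous_on_power[OF cont_ux, of 2] by (simp add: case_prod_beta)
  then show ?thesis
    unfolding energy_def using integral_continuous_on_param[of "{0..T}" 0 L "\<lambda>t x. (ux t x)\<^sup>2"] by simp
qed

lemma continuous_on_energy_rate: "continuous_on {0..T} energy_rate"
proof -
  have "continuous_on ({0..T} \<times> cbox 0 L) (\<lambda>(t, x). - uxx t x * ut t x)"
    using continuous_on_mult[OF continuous_on_minus[OF cont_uxx] cont_ut] by (simp add: case_prod_beta)
  then show ?thesis
    unfolding energy_rate_def
    using integral_continuous_on_param[of "{0..T}" 0 L "\<lambda>t x. - uxx t x * ut t x"] by simp
qed

lemma energy_nonneg: "t \<in> {0..T} \<Longrightarrow> 0 \<le> energy t"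
  unfolding energy_def
  by (intro integral_nonneg integrable_continuous_real continuous_intros cont_slice) auto

lemma energy_le:
  assumes t: "t \<in> {0<..T}"
  shows "energy t \<le> L * K\<^sup>2"
proof -
  have "energy t \<le> integral {0..L} (\<lambda>x. K\<^sup>2)"
    unfolding energy_def
  proof (rule integral_le)
    show "(\<lambda>x. (ux t x)\<^sup>2) integrable_on {0..L}"
      using t by (intro integrable_continuous_real continuous_intros cont_slice) auto
    show "(ux t x)\<^sup>2 \<le> K\<^sup>2" if "x \<in> {0..L}" for x
      using power_mono[OF ux_bound[OF t that] abs_ge_zero, of 2] by simp
  qed auto
  then show ?thesis using L by simp
qed

text \<open>Integration by parts and convexity of \<open>z \<mapsto> z\<^sup>2 / 2\<close>.\<close>
lemma energy_increment:
  assumes t: "t \<in> {0..T}" and s: "s \<in> {0..T}"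
  shows "- integral {0..L} (\<lambda>x. uxx t x * (u s x - u t x)) \<le> (energy s - energy t) / 2"
proof -
  define f where "f x = ux t x * (u s x - u t x)" for x
  have "((\<lambda>x. uxx t x * (u s x - u t x) + ux t x * (ux s x - ux t x)) has_integral (f L - f 0)) {0..L}"
  proof (rule fundamental_theorem_of_calculus)
    show "(f has_vector_derivative uxx t x * (u s x - u t x) + ux t x * (ux s x - ux t x)) (at x within {0..L})"
      if "x \<in> {0..L}" for x
      using ux_deriv_x[OF t that] u_deriv_x[OF s that] u_deriv_x[OF t that] unfolding f_def
      by (auto intro!: derivative_eq_intros simp: has_real_derivative_iff_has_vector_derivative[symmetric]
          algebra_simps)
  qed (use L in simp)
  moreover have "f L - f 0 = 0" using ux_boundary[OF t] by (simp add: f_def)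
  ultimately have "integral {0..L} (\<lambda>x. uxx t x * (u s x - u t x)) + integral {0..L} (\<lambda>x. ux t x * (ux s x - ux t x)) = 0"
    using t s by (subst integral_add[symmetric])
      (auto intro!: integrable_continuous_real continuous_intros cont_slice dest: integral_unique)
  moreover have "integral {0..L} (\<lambda>x. ux t x * (ux s x - ux t x)) \<le> integral {0..L} (\<lambda>x. ((ux s x)\<^sup>2 - (ux t x)\<^sup>2) / 2)"
  proof (rule integral_le)
    show "ux t x * (ux s x - ux t x) \<le> ((ux s x)\<^sup>2 - (ux t x)\<^sup>2) / 2" for x
      using zero_le_power2[of "ux s x - ux t x"] by (simp add: power2_eq_square algebra_simps)
  qed (use t s in \<open>auto intro!: integrable_continuous_real continuous_intros cont_slice\<close>)
  moreover have "integral {0..L} (\<lambda>x. ((ux s x)\<^sup>2 - (ux t x)\<^sup>2) / 2) = (energy s - energy t) / 2"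
    unfolding energy_def using t s
    by (subst integral_diff[symmetric]) (auto intro!: integrable_continuous_real continuous_intros cont_slice)
  ultimately show ?thesis by linarith
qed

lemma uniform_difference_quotient:
  assumes "0 < e"
  obtains d where "0 < d" "\<And>h t x. 0 < h \<Longrightarrow> h < d \<Longrightarrow> t \<in> {0..T - h} \<Longrightarrow> x \<in> {0..L} \<Longrightarrow>
     \<bar>(u (t + h) x - u t x) / h - ut t x\<bar> \<le> e"
proof -
  have "uniformly_continuous_on S (\<lambda>(t, x). ut t x)"
    by (intro compact_uniformly_continuous cont_ut compact_Times compact_Icc)
  then obtain d where "0 < d" and d: "\<And>p p'. p \<in> S \<Longrightarrow> p' \<in> S \<Longrightarrow> dist p' p < d \<Longrightarrow>
      dist ((\<lambda>(t, x). ut t x) p') ((\<lambda>(t, x). ut t x) p) < e"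
    unfolding uniformly_continuous_on_def using \<open>0 < e\<close> by metis
  show ?thesis
  proof (rule that[OF \<open>0 < d\<close>])
    fix h t x assume h: "0 < h" "h < d" and t: "t \<in> {0..T - h}" and x: "x \<in> {0..L}"
    have "continuous_on {t..t + h} (\<lambda>s. u s x)"
      using t h by (intro continuous_on_subset[OF continuous_on_curry2[OF cont_u x]]) auto
    moreover have "((\<lambda>s. u s x) has_derivative (*) (ut z x)) (at z)" if "t < z" "z < t + h" for z
      using u_deriv_t_at[of z x] that t h x by (auto intro: has_field_derivative_imp_has_derivative)
    ultimately obtain z where z: "t < z" "z < t + h" and "u (t + h) x - u t x = ut z x * (t + h - t)"
      using mvt[of t "t + h" "\<lambda>s. u s x" "\<lambda>z. (*) (ut z x)"] h by auto
    then have "(u (t + h) x - u t x) / h = ut z x" using h by simp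
    moreover have "dist (ut z x) (ut t x) < e"
      using d[of "(t, x)" "(z, x)"] t x z h by (simp add: dist_Pair_Pair dist_real_def)
    ultimately show "\<bar>(u (t + h) x - u t x) / h - ut t x\<bar> \<le> e" by (simp add: dist_real_def)
  qed
qed

lemma energy_rate_le_difference_quotient:
  assumes Bxx: "\<And>x. x \<in> {0..L} \<Longrightarrow> \<bar>uxx t x\<bar> \<le> Bxx"
    and "0 < h" and t: "t \<in> {0..T - h}"
    and dq: "\<And>x. x \<in> {0..L} \<Longrightarrow> \<bar>(u (t + h) x - u t x) / h - ut t x\<bar> \<le> e"
  shows "energy_rate t \<le> (energy (t + h) - energy t) / (2 * h) + L * (Bxx * e)"
proof -
  have t': "t \<in> {0..T}" "t + h \<in> {0..T}" using t \<open>0 < h\<close> by auto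
  have "energy_rate t \<le> integral {0..L} (\<lambda>x. - (uxx t x * (u (t + h) x - u t x)) / h + Bxx * e)"
    unfolding energy_rate_def
  proof (rule integral_le)
    show "- uxx t x * ut t x \<le> - (uxx t x * (u (t + h) x - u t x)) / h + Bxx * e" if x: "x \<in> {0..L}" for x
    proof -
      define D where "D = (u (t + h) x - u t x) / h"
      have "uxx t x * (D - ut t x) \<le> \<bar>uxx t x\<bar> * \<bar>D - ut t x\<bar>"
        by (metis abs_ge_self abs_mult)
      also have "\<dots> \<le> Bxx * e"
        using Bxx[OF x] dq[OF x] by (intro mult_mono) (auto simp: D_def)
      finally have "uxx t x * D - uxx t x * ut t x \<le> Bxx * e" by (simp add: algebra_simps)
      moreover have "- (uxx t x * (u (t + h) x - u t x)) / h = - (uxx t x * D)" by (simp add: D_def)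
      ultimately show ?thesis by simp
    qed
  qed (use t' \<open>0 < h\<close> in \<open>auto intro!: integrable_continuous_real continuous_intros cont_slice\<close>)
  also have "\<dots> = - integral {0..L} (\<lambda>x. uxx t x * (u (t + h) x - u t x)) / h + L * (Bxx * e)"
    using t' L \<open>0 < h\<close>
    by (subst integral_add) (auto intro!: integrable_continuous_real continuous_intros cont_slice
        simp: integral_divide integral_neg)
  also have "\<dots> \<le> (energy (t + h) - energy t) / 2 / h + L * (Bxx * e)"
    using divide_right_mono[OF energy_increment[OF t'], of h] \<open>0 < h\<close> by simp
  finally show ?thesis by simp
qed

lemma integral_energy_rate_head:
  assumes Bxx: "\<And>t x. t \<in> {0..T} \<Longrightarrow> x \<in> {0..L} \<Longrightarrow> \<bar>uxx t x\<bar> \<le> Bxx" and "0 \<le> Bxx" and "0 < e"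
  obtains d where "0 < d"
    "\<And>h. 0 < h \<Longrightarrow> h < d \<Longrightarrow> 2 * h \<le> T \<Longrightarrow> integral {0..T - h} energy_rate \<le> L * K\<^sup>2 / 2 + T * L * Bxx * e"
proof -
  obtain d where "0 < d" and dq: "\<And>h t x. 0 < h \<Longrightarrow> h < d \<Longrightarrow> t \<in> {0..T - h} \<Longrightarrow> x \<in> {0..L} \<Longrightarrow>
     \<bar>(u (t + h) x - u t x) / h - ut t x\<bar> \<le> e"
    using uniform_difference_quotient[OF \<open>0 < e\<close>] by blast
  show ?thesis
  proof (rule that[OF \<open>0 < d\<close>])
    fix h assume h: "0 < h" "h < d" "2 * h \<le> T"
    have int_energy: "energy integrable_on {a..b}" if "0 \<le> a" "b \<le> T" for a b
      using that by (intro integrable_continuous_real continuous_on_subset[OF continuous_on_energy]) auto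
    have "integral {0..T - h} energy_rate
        \<le> integral {0..T - h} (\<lambda>t. (energy (t + h) - energy t) / (2 * h) + L * (Bxx * e))"
    proof (rule integral_le)
      show "energy_rate t \<le> (energy (t + h) - energy t) / (2 * h) + L * (Bxx * e)" if "t \<in> {0..T - h}" for t
        using energy_rate_le_difference_quotient[OF Bxx h(1) that dq[OF h(1,2) that]] that h by auto
    qed (use h in \<open>auto intro!: integrable_continuous_real continuous_intros
        continuous_on_subset[OF continuous_on_energy_rate] continuous_on_subset[OF continuous_on_energy]
        continuous_on_compose2[OF continuous_on_energy]\<close>)
    also have "\<dots> = integral {0..T - h} (\<lambda>t. energy (t + h) - energy t) / (2 * h) + (T - h) * (L * (Bxx * e))"
      using h by (subst integral_add)
        (auto intro!: integrable_continuous_real continuous_intros continuous_on_subset[OF continuous_on_energy]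
          continuous_on_compose2[OF continuous_on_energy] simp: integral_divide)
    also have "\<dots> \<le> h * (L * K\<^sup>2) / (2 * h) + T * (L * (Bxx * e))"
    proof (rule add_mono)
      show "integral {0..T - h} (\<lambda>t. energy (t + h) - energy t) / (2 * h) \<le> h * (L * K\<^sup>2) / (2 * h)"
        using integral_forward_difference_le[OF continuous_on_energy h(1,3)] energy_nonneg energy_le h
        by (intro divide_right_mono) auto
      show "(T - h) * (L * (Bxx * e)) \<le> T * (L * (Bxx * e))"
        using h L \<open>0 \<le> Bxx\<close> \<open>0 < e\<close> by (intro mult_right_mono) auto
    qed
    finally show "integral {0..T - h} energy_rate \<le> L * K\<^sup>2 / 2 + T * L * Bxx * e"
      using h by (simp add: algebra_simps)
  qed
qed

lemma integral_energy_rate_le: "integral {0..T} energy_rate \<le> L * K\<^sup>2 / 2"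
proof (rule field_le_epsilon)
  fix e :: real assume "0 < e"
  have "compact S" by (intro compact_Times compact_Icc)
  obtain Bxx where "0 < Bxx" and Bxx: "\<And>p. p \<in> S \<Longrightarrow> \<bar>(\<lambda>(t, x). uxx t x) p\<bar> \<le> Bxx"
    using continuous_on_compact_abs_bound[OF cont_uxx \<open>compact S\<close>] by metis
  obtain BR where "0 < BR" and BR: "\<And>t. t \<in> {0..T} \<Longrightarrow> \<bar>energy_rate t\<bar> \<le> BR"
    using continuous_on_compact_abs_bound[OF continuous_on_energy_rate compact_Icc] by metis
  define \<eta> where "\<eta> = e / (2 * T * L * Bxx)"
  have "0 < \<eta>" using \<open>0 < e\<close> \<open>0 < Bxx\<close> T L by (simp add: \<eta>_def)
  have "T * L * Bxx * \<eta> \<le> e / 2"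
    using \<open>0 < Bxx\<close> T L by (simp add: \<eta>_def)
  have "\<bar>uxx t x\<bar> \<le> Bxx" if "t \<in> {0..T}" "x \<in> {0..L}" for t x
    using Bxx[of "(t, x)"] that by simp
  then obtain d where "0 < d" and head: "\<And>h. 0 < h \<Longrightarrow> h < d \<Longrightarrow> 2 * h \<le> T \<Longrightarrow>
      integral {0..T - h} energy_rate \<le> L * K\<^sup>2 / 2 + T * L * Bxx * \<eta>"
    using integral_energy_rate_head[OF _ less_imp_le[OF \<open>0 < Bxx\<close>] \<open>0 < \<eta>\<close>] by blast
  define h where "h = min d (min T (e / BR)) / 2"
  have "0 < e / BR" using \<open>0 < e\<close> \<open>0 < BR\<close> by simp
  then have h: "0 < h" "h < d" "2 * h \<le> T" "2 * h \<le> e / BR"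
    using \<open>0 < d\<close> T unfolding h_def by auto
  have "h * BR \<le> e / 2"
    using h(4) \<open>0 < BR\<close> by (simp add: le_divide_eq)
  have int: "energy_rate integrable_on {a..b}" if "0 \<le> a" "b \<le> T" for a b
    using that by (intro integrable_continuous_real continuous_on_subset[OF continuous_on_energy_rate]) auto
  have "integral {T - h..T} energy_rate \<le> integral {T - h..T} (\<lambda>t. BR)"
  proof (rule integral_le)
    show "energy_rate integrable_on {T - h..T}" using h by (intro int) auto
    show "energy_rate t \<le> BR" if "t \<in> {T - h..T}" for t
      using BR[of t] that h by (auto simp: abs_le_iff)
  qed auto
  then have tail: "integral {T - h..T} energy_rate \<le> e / 2"
    using h(1) \<open>h * BR \<le> e / 2\<close> by simp
  have "integral {0..T} energy_rate = integral {0..T - h} energy_rate + integral {T - h..T} energy_rate"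
    using h by (intro Henstock_Kurzweil_Integration.integral_combine[symmetric] int) auto
  then show "integral {0..T} energy_rate \<le> L * K\<^sup>2 / 2 + e"
    using head[OF h(1-3)] tail \<open>T * L * Bxx * \<eta> \<le> e / 2\<close> by linarith
qed

lemma integral_u_ut_le:
  assumes Ub: "\<And>x. x \<in> {0..L} \<Longrightarrow> \<bar>uT x\<bar> \<le> Ub"
  shows "integral {0..T} (\<lambda>t. integral {0..L} (\<lambda>x. u t x * ut t x)) \<le> L * Ub\<^sup>2 / 2"
proof -
  define U where "U = (\<lambda>t. integral {0..L} (\<lambda>x. (u t x)\<^sup>2 / 2))"
  have "(U has_real_derivative integral {0..L} (\<lambda>x. u t x * ut t x)) (at t within {0..T})"
    if t: "t \<in> {0..T}" for t
  proof -
    have "((\<lambda>t. integral (cbox 0 L) (\<lambda>x. (u t x)\<^sup>2 / 2)) has_real_derivative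
        integral (cbox 0 L) (\<lambda>x. u t x * ut t x)) (at t within {0..T})"
    proof (rule leibniz_rule_field_derivative)
      show "((\<lambda>s. (u s y)\<^sup>2 / 2) has_real_derivative u s y * ut s y) (at s within {0..T})"
        if "s \<in> {0..T}" "y \<in> cbox 0 L" for s y
        using u_deriv_t[of s y] that by (auto intro!: derivative_eq_intros)
      show "(\<lambda>x. (u s x)\<^sup>2 / 2) integrable_on cbox 0 L" if "s \<in> {0..T}" for s
        using that by (auto intro!: integrable_continuous_real continuous_intros cont_slice)
      show "continuous_on ({0..T} \<times> cbox 0 L) (\<lambda>(s, x). u s x * ut s x)"
        using continuous_on_mult[OF cont_u cont_ut] by (simp add: case_prod_beta)
    qed (use t in auto)
    then show ?thesis by (simp add: U_def)
  qed
  then have "((\<lambda>t. integral {0..L} (\<lambda>x. u t x * ut t x)) has_integral (U T - U 0)) {0..T}"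
    using T by (intro fundamental_theorem_of_calculus) (auto simp: has_real_derivative_iff_has_vector_derivative)
  moreover have "0 \<le> U 0"
    unfolding U_def using T by (intro integral_nonneg integrable_continuous_real continuous_intros cont_slice) auto
  moreover have "U T \<le> integral {0..L} (\<lambda>x. Ub\<^sup>2 / 2)"
    unfolding U_def
  proof (rule integral_le)
    show "(u T x)\<^sup>2 / 2 \<le> Ub\<^sup>2 / 2" if "x \<in> {0..L}" for x
      using power_mono[OF Ub[OF that] abs_ge_zero, of 2] u_terminal[OF that] by simp
  qed (use T in \<open>auto intro!: integrable_continuous_real continuous_intros cont_slice\<close>)
  ultimately show ?thesis using L by (simp add: integral_unique)
qed

lemma ut_square_le:
  assumes "(t, x) \<in> S"
  shows "(ut t x)\<^sup>2 \<le> \<sigma>\<^sup>2 * (- uxx t x * ut t x) + 2 * r * (u t x * ut t x) + ((1 + 2 * K) / 2) ^ 4"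
proof -
  define f where "f p = \<sigma>\<^sup>2 * (- uxx (fst p) (snd p) * ut (fst p) (snd p))
    + 2 * r * (u (fst p) (snd p) * ut (fst p) (snd p)) + ((1 + 2 * K) / 2) ^ 4 - (ut (fst p) (snd p))\<^sup>2" for p
  have closure: "closure ({0<..<T} \<times> {0<..<L}) = S" using T L by (simp add: closure_Times)
  have "continuous_on S (\<lambda>p. v (fst p) (snd p))" if "continuous_on S (\<lambda>(t, x). v t x)" for v
    using that by (simp add: case_prod_beta)
  then have "continuous_on S f"
    unfolding f_def using cont_u cont_ut cont_uxx by (intro continuous_intros) auto
  \<comment> \<open>the HJB equation is only imposed in the interior; extend by continuity\<close>
  moreover have "0 \<le> f q" if q: "q \<in> {0<..<T} \<times> {0<..<L}" for q
  proof -
    obtain s y where q: "q = (s, y)" and s: "s \<in> {0<..<T}" and y: "y \<in> {0<..<L}"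
      using q by (cases q) auto
    have "ut s y = - \<sigma>\<^sup>2 / 2 * uxx s y + r * u s y - (G s y)\<^sup>2" using hjb[OF s y] by simp
    from square_le_of_hjb[OF this G_bound[OF s]] y show ?thesis by (simp add: f_def q)
  qed
  ultimately have "0 \<le> f (t, x)"
    using continuous_ge_on_closure[of "{0<..<T} \<times> {0<..<L}" f "(t, x)" 0] assms closure by auto
  then show ?thesis by (simp add: f_def)
qed

lemma integral_ut_square_le:
  assumes Ub: "\<And>x. x \<in> {0..L} \<Longrightarrow> \<bar>uT x\<bar> \<le> Ub"
  shows "integral S (\<lambda>(t, x). (ut t x)\<^sup>2) \<le> L * K\<^sup>2 / 2 + r * L * Ub\<^sup>2 + ((1 + 2 * K) / 2) ^ 4 * (T * L)"
proof -
  define M where "M = ((1 + 2 * K) / 2) ^ 4"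
  define A where "A = (\<lambda>(t, x). - uxx t x * ut t x)"
  define B where "B = (\<lambda>(t, x). u t x * ut t x)"
  have S: "S = cbox (0, 0) (T, L)" by (simp add: cbox_Pair_eq)
  have cA: "continuous_on S A"
    unfolding A_def using continuous_on_mult[OF continuous_on_minus[OF cont_uxx] cont_ut] by (simp add: case_prod_beta)
  have cB: "continuous_on S B"
    unfolding B_def using continuous_on_mult[OF cont_u cont_ut] by (simp add: case_prod_beta)
  have iA: "A integrable_on S" and iB: "B integrable_on S"
    unfolding S by (intro integrable_continuous; use cA cB S in simp)+
  have iR: "(\<lambda>p. \<sigma>\<^sup>2 * A p + 2 * r * B p) integrable_on S"
    by (intro integrable_add integrable_on_mult_right[OF iA] integrable_on_mult_right[OF iB])
  have iM: "(\<lambda>p. M) integrable_on S" unfolding S by (rule integrable_const)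
  have "integral S (\<lambda>(t, x). (ut t x)\<^sup>2) \<le> integral S (\<lambda>p. \<sigma>\<^sup>2 * A p + 2 * r * B p + M)"
  proof (rule integral_le)
    have "continuous_on S (\<lambda>(t, x). (ut t x)\<^sup>2)"
      using continuous_on_power[OF cont_ut, of 2] by (simp add: case_prod_beta)
    then show "(\<lambda>(t, x). (ut t x)\<^sup>2) integrable_on S"
      unfolding S by (rule integrable_continuous)
    show "(\<lambda>p. \<sigma>\<^sup>2 * A p + 2 * r * B p + M) integrable_on S"
      using iR iM by (rule integrable_add)
    show "(\<lambda>(t, x). (ut t x)\<^sup>2) p \<le> \<sigma>\<^sup>2 * A p + 2 * r * B p + M" if "p \<in> S" for p
      using ut_square_le[of "fst p" "snd p"] that by (simp add: A_def B_def M_def case_prod_beta)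
  qed
  also have "\<dots> = \<sigma>\<^sup>2 * integral S A + 2 * r * integral S B + M * (T * L)"
  proof -
    have "integral S (\<lambda>p. M) = M * (T * L)"
      using T L unfolding S by (simp add: content_Pair)
    then show ?thesis
      using integral_add[OF iR iM] integral_add[OF integrable_on_mult_right[OF iA] integrable_on_mult_right[OF iB]]
      by (simp add: integral_mult_right)
  qed
  also have "integral S A = integral {0..T} energy_rate"
    unfolding S energy_rate_def using integral_prod_continuous[of 0 0 T L A] cA S by (simp add: A_def)
  also have "integral S B = integral {0..T} (\<lambda>t. integral {0..L} (\<lambda>x. u t x * ut t x))"
    unfolding S using integral_prod_continuous[of 0 0 T L B] cB S by (simp add: B_def)
  also have "\<sigma>\<^sup>2 * integral {0..T} energy_rate \<le> L * K\<^sup>2 / 2"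
  proof -
    have "\<sigma>\<^sup>2 * integral {0..T} energy_rate \<le> \<sigma>\<^sup>2 * (L * K\<^sup>2 / 2)"
      using integral_energy_rate_le by (intro mult_left_mono) auto
    also have "\<dots> \<le> L * K\<^sup>2 / 2"
      using sigma L mult_right_mono[of "\<sigma>\<^sup>2" 1 "L * K\<^sup>2 / 2"] by (simp add: power_le_one)
    finally show ?thesis .
  qed
  also have "2 * r * integral {0..T} (\<lambda>t. integral {0..L} (\<lambda>x. u t x * ut t x)) \<le> r * L * Ub\<^sup>2"
    using mult_left_mono[OF integral_u_ut_le[OF Ub], of "2 * r"] r by simp
  finally show ?thesis by (simp add: M_def)
qed

end

theorem lemma4p1:
  fixes L T r \<epsilon> \<gamma> :: real
    and uT uT1 uT2 m0 m01 m02 :: "real \<Rightarrow> real"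
  assumes "L > 0" and "T > 0" and "r > 0" and "\<epsilon> > 0" and "\<gamma> > 0"
    and "C2gamma L \<gamma> uT uT1 uT2" and "C2gamma L \<gamma> m0 m01 m02"
    and "uT1 0 = 0" and "uT1 L = 0"
    and "m0 0 = 0" and "m01 0 = 0" and "m0 L = 0" and "m01 L = 0"
    and "\<forall>x\<in>{0..L}. m0 x \<ge> 0" and "integral {0..L} m0 = 1"
    and "\<forall>x\<in>{0..L}. uT x \<ge> 0"
  shows "\<exists>C. \<forall>\<sigma> u ut ux uxx m mt mx mxx.
           0 < \<sigma> \<and> \<sigma> \<le> 1 \<and> classical_solution L T r \<epsilon> \<sigma> uT m0 u ut ux uxx m mt mx mxx \<longrightarrow>
           sqrt (integral ({0..T} \<times> {0..L}) (\<lambda>(t,x). (ut t x)\<^sup>2)) \<le> C"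
proof -
  have uT_deriv: "\<And>x. x \<in> {0..L} \<Longrightarrow> (uT has_real_derivative uT1 x) (at x within {0..L})"
    and uT1_deriv: "\<And>x. x \<in> {0..L} \<Longrightarrow> (uT1 has_real_derivative uT2 x) (at x within {0..L})"
    using \<open>C2gamma L \<gamma> uT uT1 uT2\<close> unfolding C2gamma_def by auto
  obtain K where "0 < K" and K: "\<And>x. x \<in> {0..L} \<Longrightarrow> \<bar>uT1 x\<bar> \<le> K"
    using continuous_on_compact_abs_bound[OF DERIV_continuous_on[OF uT1_deriv] compact_Icc] by metis
  obtain Ub where Ub: "\<And>x. x \<in> {0..L} \<Longrightarrow> \<bar>uT x\<bar> \<le> Ub"
    using continuous_on_compact_abs_bound[OF DERIV_continuous_on[OF uT_deriv] compact_Icc] by metis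
  have uT_lipschitz: "\<bar>uT x - uT y\<bar> \<le> K * \<bar>x - y\<bar>" if "x \<in> {0..L}" "y \<in> {0..L}" for x y
    using field_differentiable_bound[of "{0..L}" uT uT1 K x y] uT_deriv K that by auto
  show ?thesis
  proof (intro exI allI impI)
    fix \<sigma> u ut ux uxx m mt mx mxx
    assume "0 < \<sigma> \<and> \<sigma> \<le> 1 \<and> classical_solution L T r \<epsilon> \<sigma> uT m0 u ut ux uxx m mt mx mxx"
    then interpret mfg_solution L T r \<epsilon> \<sigma> K uT m0 u ut ux uxx m mt mx mxx
      using assms \<open>0 < K\<close> uT_lipschitz by unfold_locales auto
    show "sqrt (integral S (\<lambda>(t, x). (ut t x)\<^sup>2))
        \<le> sqrt (L * K\<^sup>2 / 2 + r * L * Ub\<^sup>2 + ((1 + 2 * K) / 2) ^ 4 * (T * L))"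
      using integral_ut_square_le[OF Ub] by (rule real_sqrt_le_mono)
  qed
qed

end
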